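(* Let $\mathcal A=\mathcal R$ be a finite set of $n_a$ units with random treatment vector $\mathbf T$, edge potential outcomes $E_{ar}$, realized edges $e_{ar}$, weights $w_{ar},u_{ar},c_{ar}$ and outcome model $y_a=\alpha_a+\beta_ax_a+\gamma_aT_a$ as in the context. Suppose $G$ is a known anchor subgraph and: (a) edges are $r$-driven; (b) the $T_r$ are independent Bernoulli$(p)$ with $p\in(0,1)$; (c) $\{(a,r)\mid u_{ar}\neq0\}\subset G$; (d) $c_{ar}=\mathbb I((a,r)\in G)$; (e) $w_{ar}\neq0$ for all $(a,r)\in G$; (f) $|\{r\mid u_{ar}\neq0\}|>0$ for all $a$. If moreover $w_{aa}=u_{aa}=0$ for all $a$, then $$\hat\mu^{u,c}_{uni}=\frac1{n_a}\sum_a\left[\hat\beta^u_a\cdot\widehat{\mathcal W_a(\mathbf 1)}^c+\hat\gamma_a\right]$$ is an unbiased estimator of the TTE $\frac1{n_a}\sum_a[\mathcal W_a(\mathbf 1)\beta_a+\gamma_a]$.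
   Context: Setting (endogenous unipartite interference graph): the analysis units and randomization units coincide, $\mathcal A=\mathcal R$, $n_a$ units. A random treatment vector $\mathbf T=(T_r)_{r\in\mathcal R}$ is assigned; all randomness comes from $\mathbf T$. For each ordered pair $(a,r)$ there is an unknown edge potential outcome function $E_{ar}:\{0,1\}^{n_a}\to\{0,1\}$ (possibly $E_{ar}\neq E_{ra}$) with observed realization $e_{ar}=E_{ar}(\mathbf T)$. Edges are $r$-driven if each $E_{ar}(\mathbf T)$ depends on $\mathbf T$ only through $T_r$. An anchor subgraph is a set $G\subset\mathcal A\times\mathcal R$ with $E_{ar}(\mathbf T)=1$ for all $\mathbf T$ and all $(a,r)\in G$. Outcome model: with known real weights $w_{ar}$, $y_a=Y_a(\mathbf T)=\alpha_a+\beta_ax_a+\gamma_aT_a$, where $x_a=\sum_rT_rE_{ar}(\mathbf T)w_{ar}$ and $\alpha_a,\beta_a,\gamma_a$ are unknown constants. TTE: $\frac1{n_a}\sum_a[Y_a(\mathbf 1)-Y_a(\mathbf 0)]=\frac1{n_a}\sum_a[\mathcal W_a(\mathbf 1)\beta_a+\gamma_a]$ with $\mathcal W_a(\mathbf 1)=\sum_rw_{ar}E_{ar}(\mathbf 1)$. Estimators: for fixed real weights $u_{ar},c_{ar}$, $z^u_a=\sum_rT_ru_{ar}$, $\hat\beta^u_a=y_a(z^u_a-\mathbb Ez^u_a)/\mathrm{Cov}(x_a,z^u_a)$, $\widehat{\mathcal W_a(\mathbf 1)}^c=\sum_r\left[\frac{T_rw_{ar}(e_{ar}-c_{ar})}{p}+w_{ar}c_{ar}\right]$,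 and $\hat\gamma_a=T_ay_a/p-(1-T_a)y_a/(1-p)$. *)

theory Defs
  imports "HOL-Probability.Probability"
begin

text \<open>Units form a finite type 'u (analysis units = randomization units).\<close>

definition treat_pmf :: "real \<Rightarrow> ('u::finite \<Rightarrow> bool) pmf" where
  "treat_pmf p = Pi_pmf UNIV False (\<lambda>_. bernoulli_pmf p)"

definition Ex_T :: "real \<Rightarrow> (('u::finite \<Rightarrow> bool) \<Rightarrow> real) \<Rightarrow> real" where
  "Ex_T p f = measure_pmf.expectation (treat_pmf p) f"

definition Cov_T :: "real \<Rightarrow> (('u::finite \<Rightarrow> bool) \<Rightarrow> real) \<Rightarrow> (('u \<Rightarrow> bool) \<Rightarrow> real) \<Rightarrow> real" where
  "Cov_T p X Z = Ex_T p (\<lambda>t. (X t - Ex_T p X) * (Z t - Ex_T p Z))"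

definition r_driven :: "('u \<Rightarrow> 'u \<Rightarrow> ('u \<Rightarrow> bool) \<Rightarrow> bool) \<Rightarrow> bool" where
  "r_driven E \<longleftrightarrow> (\<forall>a r t t'. t r = t' r \<longrightarrow> E a r t = E a r t')"

definition anchor_subgraph :: "('u \<Rightarrow> 'u \<Rightarrow> ('u \<Rightarrow> bool) \<Rightarrow> bool) \<Rightarrow> ('u \<times> 'u) set \<Rightarrow> bool" where
  "anchor_subgraph E G \<longleftrightarrow> (\<forall>(a, r) \<in> G. \<forall>t. E a r t)"

definition exposure :: "('u::finite \<Rightarrow> 'u \<Rightarrow> real) \<Rightarrow> ('u \<Rightarrow> 'u \<Rightarrow> ('u \<Rightarrow> bool) \<Rightarrow> bool)
    \<Rightarrow> 'u \<Rightarrow> ('u \<Rightarrow> bool) \<Rightarrow> real" where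
  "exposure w E a t = (\<Sum>r\<in>UNIV. of_bool (t r) * of_bool (E a r t) * w a r)"

definition outcome :: "('u \<Rightarrow> real) \<Rightarrow> ('u \<Rightarrow> real) \<Rightarrow> ('u \<Rightarrow> real) \<Rightarrow> ('u::finite \<Rightarrow> 'u \<Rightarrow> real)
    \<Rightarrow> ('u \<Rightarrow> 'u \<Rightarrow> ('u \<Rightarrow> bool) \<Rightarrow> bool) \<Rightarrow> 'u \<Rightarrow> ('u \<Rightarrow> bool) \<Rightarrow> real" where
  "outcome \<alpha> \<beta> \<gamma> w E a t = \<alpha> a + \<beta> a * exposure w E a t + \<gamma> a * of_bool (t a)"

definition zu :: "('u::finite \<Rightarrow> 'u \<Rightarrow> real) \<Rightarrow> 'u \<Rightarrow> ('u \<Rightarrow> bool) \<Rightarrow> real" where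
  "zu u a t = (\<Sum>r\<in>UNIV. of_bool (t r) * u a r)"

definition beta_hat :: "real \<Rightarrow> ('u \<Rightarrow> real) \<Rightarrow> ('u \<Rightarrow> real) \<Rightarrow> ('u \<Rightarrow> real) \<Rightarrow> ('u::finite \<Rightarrow> 'u \<Rightarrow> real)
    \<Rightarrow> ('u \<Rightarrow> 'u \<Rightarrow> ('u \<Rightarrow> bool) \<Rightarrow> bool) \<Rightarrow> ('u \<Rightarrow> 'u \<Rightarrow> real) \<Rightarrow> 'u \<Rightarrow> ('u \<Rightarrow> bool) \<Rightarrow> real" where
  "beta_hat p \<alpha> \<beta> \<gamma> w E u a t =
     outcome \<alpha> \<beta> \<gamma> w E a t * (zu u a t - Ex_T p (zu u a))
       / Cov_T p (exposure w E a) (zu u a)"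

definition W_hat :: "real \<Rightarrow> ('u::finite \<Rightarrow> 'u \<Rightarrow> real) \<Rightarrow> ('u \<Rightarrow> 'u \<Rightarrow> ('u \<Rightarrow> bool) \<Rightarrow> bool)
    \<Rightarrow> ('u \<Rightarrow> 'u \<Rightarrow> real) \<Rightarrow> 'u \<Rightarrow> ('u \<Rightarrow> bool) \<Rightarrow> real" where
  "W_hat p w E c a t =
     (\<Sum>r\<in>UNIV. of_bool (t r) * w a r * (of_bool (E a r t) - c a r) / p + w a r * c a r)"

definition gamma_hat :: "real \<Rightarrow> ('u \<Rightarrow> real) \<Rightarrow> ('u \<Rightarrow> real) \<Rightarrow> ('u \<Rightarrow> real) \<Rightarrow> ('u::finite \<Rightarrow> 'u \<Rightarrow> real)
    \<Rightarrow> ('u \<Rightarrow> 'u \<Rightarrow> ('u \<Rightarrow> bool) \<Rightarrow> bool) \<Rightarrow> 'u \<Rightarrow> ('u \<Rightarrow> bool) \<Rightarrow> real" where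
  "gamma_hat p \<alpha> \<beta> \<gamma> w E a t =
     of_bool (t a) * outcome \<alpha> \<beta> \<gamma> w E a t / p
     - (1 - of_bool (t a)) * outcome \<alpha> \<beta> \<gamma> w E a t / (1 - p)"

definition mu_hat_uni :: "real \<Rightarrow> ('u \<Rightarrow> real) \<Rightarrow> ('u \<Rightarrow> real) \<Rightarrow> ('u \<Rightarrow> real) \<Rightarrow> ('u::finite \<Rightarrow> 'u \<Rightarrow> real)
    \<Rightarrow> ('u \<Rightarrow> 'u \<Rightarrow> ('u \<Rightarrow> bool) \<Rightarrow> bool) \<Rightarrow> ('u \<Rightarrow> 'u \<Rightarrow> real) \<Rightarrow> ('u \<Rightarrow> 'u \<Rightarrow> real)
    \<Rightarrow> ('u \<Rightarrow> bool) \<Rightarrow> real" where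
  "mu_hat_uni p \<alpha> \<beta> \<gamma> w E u c t =
     (1 / real CARD('u)) * (\<Sum>a\<in>UNIV. beta_hat p \<alpha> \<beta> \<gamma> w E u a t * W_hat p w E c a t
                                      + gamma_hat p \<alpha> \<beta> \<gamma> w E a t)"

text \<open>Total treatment effect (1/n_a) sum_a [W_a(1) beta_a + gamma_a], W_a(1) = sum_r w_{ar} E_{ar}(1).\<close>
definition TTE :: "('u \<Rightarrow> real) \<Rightarrow> ('u \<Rightarrow> real) \<Rightarrow> ('u::finite \<Rightarrow> 'u \<Rightarrow> real)
    \<Rightarrow> ('u \<Rightarrow> 'u \<Rightarrow> ('u \<Rightarrow> bool) \<Rightarrow> bool) \<Rightarrow> real" where
  "TTE \<beta> \<gamma> w E =
     (1 / real CARD('u)) * (\<Sum>a\<in>UNIV. (\<Sum>r\<in>UNIV. w a r * of_bool (E a r (\<lambda>_. True))) * \<beta> a + \<gamma> a)"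

end

theory Submission
  imports Defs
begin

(*
  Fix a unit a and let A = {r. (a, r) in G}; as w_aa = 0 while w vanishes nowhere on G, a is not
  in A.  Since edges are r-driven, each random quantity reads only one of the two independent
  blocks of treatments T_A and T_(-A): the instrument z^u_a and the part of the exposure x_a coming
  from A read T_A, whereas the rest of x_a, T_a and the estimate of W_a(1) read T_(-A) (the
  A-terms of the latter are deterministic, as e_ar = c_ar = 1 there).  Hence Cov(x_a, z^u_a) is
  the covariance of z^u_a with the A-part of x_a alone, and E[y_a (z^u_a - E z^u_a) W] factorises
  as beta_a Cov(x_a, z^u_a) E[W], where E[W] = W_a(1) for any choice of c.  Likewise
  y_a - gamma_a T_a reads only T_(-a), so gamma_hat is unbiased for gamma_a.
*)

lemma expectation_pair_pmf_mult:
  fixes f :: "'a::finite \<Rightarrow> real" and g :: "'b::finite \<Rightarrow> real"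
  shows "measure_pmf.expectation (pair_pmf P Q) (\<lambda>z. f (fst z) * g (snd z))
       = measure_pmf.expectation P f * measure_pmf.expectation Q g"
proof -
  have "measure_pmf.expectation (pair_pmf P Q) (\<lambda>z. f (fst z) * g (snd z))
      = (\<Sum>z\<in>UNIV. f (fst z) * g (snd z) * pmf (pair_pmf P Q) z)"
    by (rule integral_measure_pmf_real) auto
  also have "\<dots> = (\<Sum>x\<in>UNIV. \<Sum>y\<in>UNIV. (f x * pmf P x) * (g y * pmf Q y))"
    by (simp add: UNIV_Times_UNIV[symmetric] sum.cartesian_product del: UNIV_Times_UNIV)
       (simp add: case_prod_unfold pmf_pair[symmetric] mult_ac)
  also have "\<dots> = (\<Sum>x\<in>UNIV. f x * pmf P x) * (\<Sum>y\<in>UNIV. g y * pmf Q y)"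
    by (simp add: sum_product)
  also have "\<dots> = measure_pmf.expectation P f * measure_pmf.expectation Q g"
    by (subst (1 2) integral_measure_pmf_real[where A = UNIV]) auto
  finally show ?thesis .
qed

definition depends_only_on :: "'i set \<Rightarrow> (('i \<Rightarrow> 'a) \<Rightarrow> 'b) \<Rightarrow> bool" where
  "depends_only_on A f \<longleftrightarrow> (\<forall>t t'. (\<forall>i\<in>A. t i = t' i) \<longrightarrow> f t = f t')"

lemma depends_only_onD: "depends_only_on A f \<Longrightarrow> (\<And>i. i \<in> A \<Longrightarrow> t i = t' i) \<Longrightarrow> f t = f t'"
  unfolding depends_only_on_def by blast

lemma depends_only_on_const: "depends_only_on A (\<lambda>t. c)"
  unfolding depends_only_on_def by simp

lemma depends_only_on_coord: "i \<in> A \<Longrightarrow> depends_only_on A (\<lambda>t. f (t i))"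
  unfolding depends_only_on_def by simp

lemma depends_only_on_add:
  "depends_only_on A f \<Longrightarrow> depends_only_on A g \<Longrightarrow> depends_only_on A (\<lambda>t. f t + g t)"
  unfolding depends_only_on_def by metis

lemma depends_only_on_diff:
  "depends_only_on A f \<Longrightarrow> depends_only_on A g \<Longrightarrow> depends_only_on A (\<lambda>t. f t - g t)"
  unfolding depends_only_on_def by metis

lemma depends_only_on_mult:
  "depends_only_on A f \<Longrightarrow> depends_only_on A g \<Longrightarrow> depends_only_on A (\<lambda>t. f t * g t)"
  unfolding depends_only_on_def by metis

lemma integrable_treat_pmf [simp]:
  "integrable (measure_pmf (treat_pmf p)) (f :: ('u::finite \<Rightarrow> bool) \<Rightarrow> real)"
  by (rule integrable_measure_pmf_finite) simp

lemma Ex_T_add: "Ex_T p (\<lambda>t. f t + g t) = Ex_T p f + Ex_T p g"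
  unfolding Ex_T_def by (simp add: Bochner_Integration.integral_add)

lemma Ex_T_diff: "Ex_T p (\<lambda>t. f t - g t) = Ex_T p f - Ex_T p g"
  unfolding Ex_T_def by (simp add: Bochner_Integration.integral_diff)

lemma Ex_T_sum: "Ex_T p (\<lambda>t. \<Sum>i\<in>I. f i t) = (\<Sum>i\<in>I. Ex_T p (f i))"
  unfolding Ex_T_def by (simp add: Bochner_Integration.integral_sum)

lemma Ex_T_cmult: "Ex_T p (\<lambda>t. c * f t) = c * Ex_T p f"
  unfolding Ex_T_def by simp

lemma Ex_T_const: "Ex_T p (\<lambda>t. c) = c"
  unfolding Ex_T_def by simp

lemma Ex_T_coord:
  assumes "0 \<le> p" "p \<le> 1"
  shows "Ex_T p (\<lambda>t::'u::finite \<Rightarrow> bool. of_bool (t r)) = p"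
proof -
  have "Ex_T p (\<lambda>t::'u \<Rightarrow> bool. of_bool (t r))
      = measure_pmf.expectation (map_pmf (\<lambda>t. t r) (treat_pmf p :: ('u \<Rightarrow> bool) pmf)) of_bool"
    unfolding Ex_T_def by simp
  also have "\<dots> = measure_pmf.expectation (bernoulli_pmf p) of_bool"
    unfolding treat_pmf_def by (subst Pi_pmf_component) auto
  finally show ?thesis using assms by simp
qed

lemma Ex_T_mult_indep:
  fixes f g :: "('u::finite \<Rightarrow> bool) \<Rightarrow> real"
  assumes f: "depends_only_on A f" and g: "depends_only_on (- A) g"
  shows "Ex_T p (\<lambda>t. f t * g t) = Ex_T p f * Ex_T p g"
proof -
  let ?B = "\<lambda>_::'u. bernoulli_pmf p"
  define merge where "merge = (\<lambda>(x, y) i. if i \<in> A then (x :: 'u \<Rightarrow> bool) i else y i)"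
  define Q where "Q = pair_pmf (Pi_pmf A False ?B) (Pi_pmf (- A) False ?B)"
  have treat_Q: "treat_pmf p = map_pmf merge Q"
    unfolding treat_pmf_def merge_def Q_def using Pi_pmf_union[of A "- A" False ?B] by simp
  have f_merge: "f (merge z) = f (fst z)" for z
    by (cases z) (auto simp: merge_def intro: depends_only_onD[OF f])
  have g_merge: "g (merge z) = g (snd z)" for z
    by (cases z) (auto simp: merge_def intro: depends_only_onD[OF g])
  have "Ex_T p (\<lambda>t. f t * g t) = measure_pmf.expectation Q (\<lambda>z. f (fst z) * g (snd z))"
    unfolding Ex_T_def treat_Q by (simp add: f_merge g_merge)
  also have "\<dots> = Ex_T p f * Ex_T p g"
    unfolding expectation_pair_pmf_mult Ex_T_def treat_Q Q_def
    by (simp add: f_merge[unfolded Q_def] g_merge[unfolded Q_def])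
  finally show ?thesis .
qed

lemma Ex_T_centered_mult_indep:
  fixes f g :: "('u::finite \<Rightarrow> bool) \<Rightarrow> real"
  assumes "depends_only_on A f" and "depends_only_on (- A) g"
  shows "Ex_T p (\<lambda>t. (f t - Ex_T p f) * g t) = 0"
  using Ex_T_mult_indep[OF depends_only_on_diff[OF assms(1) depends_only_on_const] assms(2)]
  by (simp add: Ex_T_diff Ex_T_const)

lemma Cov_T_eq_Ex_T_mult_centered:
  "Cov_T p X Z = Ex_T p (\<lambda>t. X t * (Z t - Ex_T p Z))"
proof -
  have "Cov_T p X Z = Ex_T p (\<lambda>t. X t * (Z t - Ex_T p Z) - Ex_T p X * (Z t - Ex_T p Z))"
    unfolding Cov_T_def by (simp add: algebra_simps)
  then show ?thesis
    by (simp add: Ex_T_diff Ex_T_cmult Ex_T_const)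
qed

lemma Ex_T_coord_mult:
  fixes g :: "('u::finite \<Rightarrow> bool) \<Rightarrow> real"
  assumes "0 \<le> p" "p \<le> 1" and "depends_only_on (- {a}) g"
  shows "Ex_T p (\<lambda>t. of_bool (t a) * g t) = p * Ex_T p g"
proof -
  have "Ex_T p (\<lambda>t. of_bool (t a) * g t) = Ex_T p (\<lambda>t. of_bool (t a)) * Ex_T p g"
    by (rule Ex_T_mult_indep[OF depends_only_on_coord assms(3)]) simp
  also have "Ex_T p (\<lambda>t::'u \<Rightarrow> bool. of_bool (t a)) = p"
    using assms(1,2) by (rule Ex_T_coord)
  finally show ?thesis .
qed

lemma r_driven_edge_eq: "r_driven E \<Longrightarrow> t r = t' r \<Longrightarrow> E a r t = E a r t'"
  unfolding r_driven_def by metis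

definition partial_exposure :: "('u::finite \<Rightarrow> 'u \<Rightarrow> real) \<Rightarrow> ('u \<Rightarrow> 'u \<Rightarrow> ('u \<Rightarrow> bool) \<Rightarrow> bool)
    \<Rightarrow> 'u \<Rightarrow> 'u set \<Rightarrow> ('u \<Rightarrow> bool) \<Rightarrow> real" where
  "partial_exposure w E a A t = (\<Sum>r\<in>A. of_bool (t r) * of_bool (E a r t) * w a r)"

lemma exposure_split:
  "exposure w E a t = partial_exposure w E a A t + partial_exposure w E a (- A) t"
  unfolding exposure_def partial_exposure_def
  using sum.union_disjoint[of A "- A"] by simp

lemma depends_only_on_partial_exposure:
  fixes E :: "'u::finite \<Rightarrow> 'u \<Rightarrow> ('u \<Rightarrow> bool) \<Rightarrow> bool"
  assumes "r_driven E"
  shows "depends_only_on A (partial_exposure w E a A)"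
  unfolding depends_only_on_def partial_exposure_def
proof (intro allI impI sum.cong refl)
  fix t t' :: "'u \<Rightarrow> bool" and r
  assume "\<forall>i\<in>A. t i = t' i" "r \<in> A"
  then show "of_bool (t r) * of_bool (E a r t) * w a r = of_bool (t' r) * of_bool (E a r t') * w a r"
    using r_driven_edge_eq[OF assms, of t r t' a] by simp
qed

lemma depends_only_on_zu:
  fixes u :: "'u::finite \<Rightarrow> 'u \<Rightarrow> real"
  assumes "\<And>r. u a r \<noteq> 0 \<Longrightarrow> r \<in> A"
  shows "depends_only_on A (zu u a)"
  unfolding depends_only_on_def zu_def
proof (intro allI impI sum.cong refl)
  fix t t' :: "'u \<Rightarrow> bool" and r
  assume "\<forall>i\<in>A. t i = t' i"
  then show "of_bool (t r) * u a r = of_bool (t' r) * u a r"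
    using assms[of r] by (cases "u a r = 0") auto
qed

lemma depends_only_on_W_hat:
  fixes E :: "'u::finite \<Rightarrow> 'u \<Rightarrow> ('u \<Rightarrow> bool) \<Rightarrow> bool"
  assumes "r_driven E" and "\<And>r t. r \<in> A \<Longrightarrow> E a r t" and "\<And>r. r \<in> A \<Longrightarrow> c a r = 1"
  shows "depends_only_on (- A) (W_hat p w E c a)"
  unfolding depends_only_on_def W_hat_def
proof (intro allI impI sum.cong refl)
  fix t t' :: "'u \<Rightarrow> bool" and r
  assume agree: "\<forall>i\<in>- A. t i = t' i"
  show "of_bool (t r) * w a r * (of_bool (E a r t) - c a r) / p + w a r * c a r
      = of_bool (t' r) * w a r * (of_bool (E a r t') - c a r) / p + w a r * c a r"
  proof (cases "r \<in> A")
    case True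
    then show ?thesis using assms(2,3) by simp
  next
    case False
    then have "t r = t' r" using agree by simp
    then show ?thesis using r_driven_edge_eq[OF assms(1), of t r t' a] by simp
  qed
qed

lemma Ex_T_W_hat:
  fixes E :: "'u::finite \<Rightarrow> 'u \<Rightarrow> ('u \<Rightarrow> bool) \<Rightarrow> bool"
  assumes "r_driven E" and "0 < p" "p \<le> 1"
  shows "Ex_T p (W_hat p w E c a) = (\<Sum>r\<in>UNIV. w a r * of_bool (E a r (\<lambda>_. True)))"
proof -
  have summand: "of_bool (t r) * w a r * (of_bool (E a r t) - c a r) / p + w a r * c a r
      = w a r * (of_bool (E a r (\<lambda>_. True)) - c a r) / p * of_bool (t r) + w a r * c a r"
    for t :: "'u \<Rightarrow> bool" and r
    using r_driven_edge_eq[OF assms(1), of t r "\<lambda>_. True" a] by (cases "t r") auto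
  have "Ex_T p (W_hat p w E c a)
      = (\<Sum>r\<in>UNIV. w a r * (of_bool (E a r (\<lambda>_. True)) - c a r) / p * p + w a r * c a r)"
    unfolding W_hat_def[abs_def] summand Ex_T_sum Ex_T_add Ex_T_cmult Ex_T_const
      Ex_T_coord[OF less_imp_le[OF assms(2)] assms(3)] ..
  also have "\<dots> = (\<Sum>r\<in>UNIV. w a r * of_bool (E a r (\<lambda>_. True)))"
    using assms(2) by (simp add: right_diff_distrib)
  finally show ?thesis .
qed

lemma Ex_T_gamma_hat:
  fixes E :: "'u::finite \<Rightarrow> 'u \<Rightarrow> ('u \<Rightarrow> bool) \<Rightarrow> bool"
  assumes "r_driven E" and p: "0 < p" "p < 1" and "w a a = 0"
  shows "Ex_T p (gamma_hat p \<alpha> \<beta> \<gamma> w E a) = \<gamma> a"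
proof -
  define R where "R t = \<alpha> a + \<beta> a * exposure w E a t" for t
  have "exposure w E a = partial_exposure w E a (- {a})"
    using exposure_split[where A = "- {a}"] assms(4) by (auto simp: partial_exposure_def)
  then have dR: "depends_only_on (- {a}) R"
    unfolding R_def using assms(1)
    by (intro depends_only_on_add depends_only_on_mult depends_only_on_const)
       (simp add: depends_only_on_partial_exposure)
  have "gamma_hat p \<alpha> \<beta> \<gamma> w E a
      = (\<lambda>t. 1 / p * (of_bool (t a) * (R t + \<gamma> a)) - 1 / (1 - p) * (R t - of_bool (t a) * R t))"
    by (rule ext) (simp add: gamma_hat_def outcome_def R_def of_bool_def)
  then have "Ex_T p (gamma_hat p \<alpha> \<beta> \<gamma> w E a)
      = 1 / p * Ex_T p (\<lambda>t. of_bool (t a) * (R t + \<gamma> a))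
        - 1 / (1 - p) * (Ex_T p R - Ex_T p (\<lambda>t. of_bool (t a) * R t))"
    by (simp only: Ex_T_diff Ex_T_cmult)
  also have "\<dots> = 1 / p * (p * (Ex_T p R + \<gamma> a)) - 1 / (1 - p) * (Ex_T p R - p * Ex_T p R)"
    using p dR
    by (simp add: Ex_T_coord_mult depends_only_on_add depends_only_on_const Ex_T_add Ex_T_const)
  also have "\<dots> = \<gamma> a"
    using p by (simp add: field_simps)
  finally show ?thesis .
qed

lemma Ex_T_cov_ratio_mult:
  fixes Z X1 X2 V W :: "('u::finite \<Rightarrow> bool) \<Rightarrow> real"
  assumes dZ: "depends_only_on A Z" and dX1: "depends_only_on A X1"
    and dX2: "depends_only_on (- A) X2" and dV: "depends_only_on (- A) V"
    and dW: "depends_only_on (- A) W"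
    and cov: "Cov_T p (\<lambda>t. X1 t + X2 t) Z \<noteq> 0"
  shows "Ex_T p (\<lambda>t. (\<beta> * (X1 t + X2 t) + V t) * (Z t - Ex_T p Z)
           / Cov_T p (\<lambda>t. X1 t + X2 t) Z * W t) = \<beta> * Ex_T p W"
proof -
  define Zc where "Zc t = Z t - Ex_T p Z" for t
  define K where "K = Cov_T p (\<lambda>t. X1 t + X2 t) Z"
  have dZc: "depends_only_on A Zc"
    unfolding Zc_def by (intro depends_only_on_diff dZ depends_only_on_const)
  have centered: "Ex_T p (\<lambda>t. Zc t * g t) = 0" if "depends_only_on (- A) g" for g
    unfolding Zc_def by (rule Ex_T_centered_mult_indep[OF dZ that])
  have K_eq: "K = Ex_T p (\<lambda>t. X1 t * Zc t)"
  proof -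
    have "K = Ex_T p (\<lambda>t. X1 t * Zc t + Zc t * X2 t)"
      unfolding K_def Cov_T_eq_Ex_T_mult_centered Zc_def by (simp add: algebra_simps)
    then show ?thesis
      using centered[OF dX2] by (simp add: Ex_T_add)
  qed
  have "(\<lambda>t. (\<beta> * (X1 t + X2 t) + V t) * Zc t / K * W t)
      = (\<lambda>t. 1 / K * (\<beta> * (X1 t * Zc t * W t) + Zc t * ((\<beta> * X2 t + V t) * W t)))"
    by (rule ext) (simp add: algebra_simps add_divide_distrib)
  then have "Ex_T p (\<lambda>t. (\<beta> * (X1 t + X2 t) + V t) * Zc t / K * W t)
      = 1 / K * (\<beta> * Ex_T p (\<lambda>t. X1 t * Zc t * W t) + Ex_T p (\<lambda>t. Zc t * ((\<beta> * X2 t + V t) * W t)))"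
    by (simp only: Ex_T_add Ex_T_cmult)
  also have "Ex_T p (\<lambda>t. X1 t * Zc t * W t) = K * Ex_T p W"
    unfolding K_eq by (rule Ex_T_mult_indep[OF depends_only_on_mult[OF dX1 dZc] dW])
  also have "Ex_T p (\<lambda>t. Zc t * ((\<beta> * X2 t + V t) * W t)) = 0"
    by (intro centered depends_only_on_mult depends_only_on_add depends_only_on_const dX2 dV dW)
  finally show ?thesis
    using cov unfolding Zc_def K_def by simp
qed

lemma Ex_T_beta_hat_mult_W_hat:
  fixes E :: "'u::finite \<Rightarrow> 'u \<Rightarrow> ('u \<Rightarrow> bool) \<Rightarrow> bool"
  assumes rd: "r_driven E" and p: "0 < p" "p \<le> 1"
    and a_notin: "a \<notin> A"
    and u_supp: "\<And>r. u a r \<noteq> 0 \<Longrightarrow> r \<in> A"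
    and anchored: "\<And>r t. r \<in> A \<Longrightarrow> E a r t"
    and c_anchor: "\<And>r. r \<in> A \<Longrightarrow> c a r = 1"
    and cov: "Cov_T p (exposure w E a) (zu u a) \<noteq> 0"
  shows "Ex_T p (\<lambda>t. beta_hat p \<alpha> \<beta> \<gamma> w E u a t * W_hat p w E c a t)
       = \<beta> a * (\<Sum>r\<in>UNIV. w a r * of_bool (E a r (\<lambda>_. True)))"
proof -
  let ?X1 = "partial_exposure w E a A" and ?X2 = "partial_exposure w E a (- A)"
  have x_split: "exposure w E a = (\<lambda>t. ?X1 t + ?X2 t)"
    by (rule ext) (rule exposure_split)
  have "Ex_T p (\<lambda>t. beta_hat p \<alpha> \<beta> \<gamma> w E u a t * W_hat p w E c a t)
      = Ex_T p (\<lambda>t. (\<beta> a * (?X1 t + ?X2 t) + (\<alpha> a + \<gamma> a * of_bool (t a)))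
          * (zu u a t - Ex_T p (zu u a)) / Cov_T p (\<lambda>t. ?X1 t + ?X2 t) (zu u a) * W_hat p w E c a t)"
    unfolding beta_hat_def outcome_def x_split by (simp add: algebra_simps)
  also have "\<dots> = \<beta> a * Ex_T p (W_hat p w E c a)"
  proof (rule Ex_T_cov_ratio_mult)
    show "depends_only_on A (zu u a)"
      using u_supp by (rule depends_only_on_zu)
    show "depends_only_on A ?X1" "depends_only_on (- A) ?X2"
      using rd by (rule depends_only_on_partial_exposure)+
    show "depends_only_on (- A) (\<lambda>t. \<alpha> a + \<gamma> a * of_bool (t a))"
      using a_notin
      by (intro depends_only_on_add depends_only_on_mult depends_only_on_const depends_only_on_coord) simp
    show "depends_only_on (- A) (W_hat p w E c a)"
      using rd anchored c_anchor by (rule depends_only_on_W_hat)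
    show "Cov_T p (\<lambda>t. ?X1 t + ?X2 t) (zu u a) \<noteq> 0"
      using cov unfolding x_split .
  qed
  also have "\<dots> = \<beta> a * (\<Sum>r\<in>UNIV. w a r * of_bool (E a r (\<lambda>_. True)))"
    using rd p by (simp add: Ex_T_W_hat)
  finally show ?thesis .
qed

theorem corollary1:
  fixes p :: real
    and \<alpha> \<beta> \<gamma> :: "'u::finite \<Rightarrow> real"
    and w u c :: "'u \<Rightarrow> 'u \<Rightarrow> real"
    and E :: "'u \<Rightarrow> 'u \<Rightarrow> ('u \<Rightarrow> bool) \<Rightarrow> bool"
    and G :: "('u \<times> 'u) set"
  assumes anchor: "anchor_subgraph E G"
    and a_rdriven: "r_driven E"
    and b_p: "0 < p" "p < 1"
    and c_supp: "\<And>a r. u a r \<noteq> 0 \<Longrightarrow> (a, r) \<in> G"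
    and d_c: "\<And>a r. c a r = of_bool ((a, r) \<in> G)"
    and e_w: "\<And>a r. (a, r) \<in> G \<Longrightarrow> w a r \<noteq> 0"
    and f_u: "\<And>a. card {r. u a r \<noteq> 0} > 0"
    and cov_nz: "\<And>a. Cov_T p (exposure w E a) (zu u a) \<noteq> 0"
    and w_diag: "\<And>a. w a a = 0"
    and u_diag: "\<And>a. u a a = 0"
  shows "Ex_T p (mu_hat_uni p \<alpha> \<beta> \<gamma> w E u c) = TTE \<beta> \<gamma> w E"
proof -
  have unit: "Ex_T p (\<lambda>t. beta_hat p \<alpha> \<beta> \<gamma> w E u a t * W_hat p w E c a t + gamma_hat p \<alpha> \<beta> \<gamma> w E a t)
      = (\<Sum>r\<in>UNIV. w a r * of_bool (E a r (\<lambda>_. True))) * \<beta> a + \<gamma> a" for a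
  proof -
    have "Ex_T p (\<lambda>t. beta_hat p \<alpha> \<beta> \<gamma> w E u a t * W_hat p w E c a t)
        = \<beta> a * (\<Sum>r\<in>UNIV. w a r * of_bool (E a r (\<lambda>_. True)))"
    proof (rule Ex_T_beta_hat_mult_W_hat[where A = "{r. (a, r) \<in> G}"])
      show "a \<notin> {r. (a, r) \<in> G}"
        using e_w w_diag by auto
      show "E a r t" if "r \<in> {r. (a, r) \<in> G}" for r t
        using anchor that unfolding anchor_subgraph_def by auto
    qed (use a_rdriven b_p c_supp d_c cov_nz in auto)
    moreover have "Ex_T p (gamma_hat p \<alpha> \<beta> \<gamma> w E a) = \<gamma> a"
      using a_rdriven b_p w_diag by (rule Ex_T_gamma_hat)
    ultimately show ?thesis
      by (simp add: Ex_T_add mult.commute)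
  qed
  show ?thesis
    unfolding mu_hat_uni_def[abs_def] TTE_def Ex_T_cmult Ex_T_sum unit ..
qed

end
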